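(* Let $G$ be a group generated by involutions (elements $i$ with $i^2=e$) and $H$ an abelian group (written additively). Assume $f:G\to H$ satisfies $f(xy)+f(xy^{-1})=2f(x)$ for all $x,y\in G$, with $f(e)=0$. Then: (I) $f(xyz)=f(xzy)$ for all $x,y,z\in G$. (II) Consequently, for any word $g=i_1\cdots i_r$ in involutions, swapping any adjacent pair $i_k,i_{k+1}$ does not change the value $f(g)$. *)

theory Defs
  imports "HOL-Algebra.Algebra"
begin

definition word_prod :: "('a, 'b) monoid_scheme \<Rightarrow> 'a list \<Rightarrow> 'a" where
  "word_prod G ws = foldr (\<lambda>a b. a \<otimes>\<^bsub>G\<^esub> b) ws \<one>\<^bsub>G\<^esub>"

definition involutions :: "('a, 'b) monoid_scheme \<Rightarrow> 'a set" where
  "involutions G = {i \<in> carrier G. i \<otimes>\<^bsub>G\<^esub> i = \<one>\<^bsub>G\<^esub>}"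

end

theory Submission
  imports Defs
begin

text \<open>
  Putting \<open>x = \<one>\<close> in Jensen's equation gives \<open>f y + f (y\<inverse>) = 2 f \<one>\<close>; putting \<open>x = i\<close>,
  \<open>y = w i\<close> for an involution \<open>i\<close> gives \<open>f (i w i) + f (w\<inverse>) = 2 f i = 2 f \<one>\<close>. Hence \<open>f\<close> is
  invariant under conjugation by involutions, and so under conjugation by every element of
  a group they generate. Left translates \<open>u \<mapsto> f (x u)\<close> again solve Jensen's equation, and
  conjugating \<open>y z\<close> by \<open>z\<close> gives \<open>f (x y z) = f (x z y)\<close>. Swapping adjacent letters of a
  word is a special case.
\<close>

definition jensen :: "('a, 'c) monoid_scheme \<Rightarrow> ('a \<Rightarrow> 'b::ab_group_add) \<Rightarrow> bool" where
  "jensen G h \<longleftrightarrow>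
     (\<forall>x\<in>carrier G. \<forall>y\<in>carrier G. h (x \<otimes>\<^bsub>G\<^esub> y) + h (x \<otimes>\<^bsub>G\<^esub> inv\<^bsub>G\<^esub> y) = h x + h x)"

lemma jensenD:
  "jensen G h \<Longrightarrow> x \<in> carrier G \<Longrightarrow> y \<in> carrier G \<Longrightarrow>
     h (x \<otimes>\<^bsub>G\<^esub> y) + h (x \<otimes>\<^bsub>G\<^esub> inv\<^bsub>G\<^esub> y) = h x + h x"
  by (simp add: jensen_def)

lemma word_prod_Nil [simp]: "word_prod G [] = \<one>\<^bsub>G\<^esub>"
  by (simp add: word_prod_def)

lemma word_prod_Cons [simp]: "word_prod G (a # ws) = a \<otimes>\<^bsub>G\<^esub> word_prod G ws"
  by (simp add: word_prod_def)

context group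
begin

lemma involutions_subset_carrier: "involutions G \<subseteq> carrier G"
  by (auto simp: involutions_def)

lemma inv_involution: "i \<in> involutions G \<Longrightarrow> inv i = i"
  by (auto simp: involutions_def intro: inv_equality)

lemma jensen_left_translate:
  assumes "jensen G h" and "x \<in> carrier G"
  shows "jensen G (\<lambda>u. h (x \<otimes> u))"
  using assms by (simp add: jensen_def m_assoc[symmetric])

lemma jensen_add_inv:
  assumes "jensen G h" and "w \<in> carrier G"
  shows "h w + h (inv w) = h \<one> + h \<one>"
  using jensenD[OF assms(1) one_closed assms(2)] assms(2) by simp

lemma jensen_conj_involution:
  assumes J: "jensen G h" and i: "i \<in> involutions G" and w: "w \<in> carrier G"
  shows "h (i \<otimes> w \<otimes> i) = h w"
proof -
  have ic: "i \<in> carrier G" and sq: "i \<otimes> i = \<one>" and ii: "inv i = i"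
    using i inv_involution by (auto simp: involutions_def)
  have "i \<otimes> inv (w \<otimes> i) = inv w"
    using ic w sq ii by (simp add: inv_mult_group m_assoc[symmetric])
  then have "h (i \<otimes> w \<otimes> i) + h (inv w) = h i + h i"
    using jensenD[OF J ic, of "w \<otimes> i"] ic w by (simp add: m_assoc)
  also have "\<dots> = h \<one> + h \<one>"
    using jensen_add_inv[OF J ic] ii by simp
  also have "\<dots> = h w + h (inv w)"
    using jensen_add_inv[OF J w] by simp
  finally show ?thesis by simp
qed

lemma jensen_conj_generate:
  assumes J: "jensen G h" and g: "g \<in> generate G (involutions G)" and w: "w \<in> carrier G"
  shows "h (g \<otimes> w \<otimes> inv g) = h w"
  using g w
proof (induction g arbitrary: w rule: generate.induct)
  case one
  then show ?case by simp
next
  case (incl i)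
  then show ?case using jensen_conj_involution[OF J] inv_involution by simp
next
  case (inv i)
  then show ?case using jensen_conj_involution[OF J] inv_involution by simp
next
  case (eng g1 g2)
  have g12: "g1 \<in> carrier G" "g2 \<in> carrier G"
    using eng.hyps generate_in_carrier[OF involutions_subset_carrier] by auto
  have "g1 \<otimes> g2 \<otimes> w \<otimes> inv (g1 \<otimes> g2) = g1 \<otimes> (g2 \<otimes> w \<otimes> inv g2) \<otimes> inv g1"
    using g12 eng.prems by (simp add: inv_mult_group m_assoc)
  then show ?case
    using eng.IH g12 eng.prems by simp
qed

lemma jensen_swap:
  assumes gen: "carrier G = generate G (involutions G)" and J: "jensen G h"
    and x: "x \<in> carrier G" and y: "y \<in> carrier G" and z: "z \<in> carrier G"
  shows "h (x \<otimes> y \<otimes> z) = h (x \<otimes> z \<otimes> y)"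
proof -
  have "z \<in> generate G (involutions G)"
    using gen z by simp
  from jensen_conj_generate[OF jensen_left_translate[OF J x] this m_closed[OF y z]]
  have "h (x \<otimes> (z \<otimes> (y \<otimes> z) \<otimes> inv z)) = h (x \<otimes> (y \<otimes> z))" .
  moreover have "z \<otimes> (y \<otimes> z) \<otimes> inv z = z \<otimes> y"
    using y z by (simp add: m_assoc)
  ultimately show ?thesis
    using x y z by (simp add: m_assoc)
qed

lemma word_prod_closed: "set ws \<subseteq> carrier G \<Longrightarrow> word_prod G ws \<in> carrier G"
  by (induction ws) auto

lemma word_prod_append:
  "set as \<subseteq> carrier G \<Longrightarrow> set bs \<subseteq> carrier G \<Longrightarrow>
     word_prod G (as @ bs) = word_prod G as \<otimes> word_prod G bs"
  by (induction as) (auto simp: m_assoc word_prod_closed)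

lemma word_prod_swap_adjacent:
  assumes swap: "\<And>x y z. x \<in> carrier G \<Longrightarrow> y \<in> carrier G \<Longrightarrow> z \<in> carrier G \<Longrightarrow>
                   h (x \<otimes> y \<otimes> z) = h (x \<otimes> z \<otimes> y)"
    and ws: "set ws \<subseteq> carrier G" and k: "Suc k < length ws"
  shows "h (word_prod G (ws[k := ws ! Suc k, Suc k := ws ! k])) = h (word_prod G ws)"
proof -
  define a r i j where "a = take k ws" and "r = drop (Suc (Suc k)) ws"
    and "i = ws ! k" and "j = ws ! Suc k"
  have "drop k ws = i # j # r"
    using k by (simp add: Cons_nth_drop_Suc i_def j_def r_def)
  then have ws_eq: "ws = a @ [i, j] @ r"
    by (metis a_def append_Cons append_Nil append_take_drop_id)
  have "length a = k"
    using k by (simp add: a_def)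
  then have swapped_eq: "ws[k := j, Suc k := i] = a @ [j, i] @ r"
    by (subst ws_eq) (simp add: list_update_append)
  have a_r: "set a \<subseteq> carrier G" "set r \<subseteq> carrier G" and i_j: "i \<in> carrier G" "j \<in> carrier G"
    using ws unfolding ws_eq by auto
  define A R where "A = word_prod G a" and "R = word_prod G r"
  have A_R: "A \<in> carrier G" "R \<in> carrier G"
    using a_r by (simp_all add: A_def R_def word_prod_closed)
  have "h (A \<otimes> i \<otimes> (j \<otimes> R)) = h (A \<otimes> (j \<otimes> R) \<otimes> i)"
    using swap A_R i_j by simp
  moreover have "h (A \<otimes> j \<otimes> i \<otimes> R) = h (A \<otimes> j \<otimes> R \<otimes> i)"
    using swap A_R i_j by simp
  moreover have "word_prod G ws = A \<otimes> (i \<otimes> (j \<otimes> R))"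
    using a_r i_j by (subst ws_eq) (simp add: word_prod_append A_def R_def)
  moreover have "word_prod G (ws[k := j, Suc k := i]) = A \<otimes> (j \<otimes> (i \<otimes> R))"
    using a_r i_j by (simp add: swapped_eq word_prod_append A_def R_def)
  ultimately show ?thesis
    using A_R i_j by (simp add: i_def j_def m_assoc)
qed

end

theorem mainTheorem4:
  fixes G :: "('a, 'c) monoid_scheme" and f :: "'a \<Rightarrow> 'b::ab_group_add"
  assumes "group G"
    and "carrier G = generate G (involutions G)"
    and "\<And>x y. x \<in> carrier G \<Longrightarrow> y \<in> carrier G \<Longrightarrow>
           f (x \<otimes>\<^bsub>G\<^esub> y) + f (x \<otimes>\<^bsub>G\<^esub> inv\<^bsub>G\<^esub> y) = f x + f x"
    and "f \<one>\<^bsub>G\<^esub> = 0"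
  shows "(\<forall>x\<in>carrier G. \<forall>y\<in>carrier G. \<forall>z\<in>carrier G.
            f (x \<otimes>\<^bsub>G\<^esub> y \<otimes>\<^bsub>G\<^esub> z) = f (x \<otimes>\<^bsub>G\<^esub> z \<otimes>\<^bsub>G\<^esub> y))
       \<and> (\<forall>ws k. set ws \<subseteq> involutions G \<longrightarrow> Suc k < length ws \<longrightarrow>
            f (word_prod G (ws[k := ws ! Suc k, Suc k := ws ! k])) = f (word_prod G ws))"
proof -
  interpret group G by fact
  have J: "jensen G f"
    using assms(3) by (simp add: jensen_def)
  note swap = jensen_swap[OF assms(2) J]
  show ?thesis
    using swap word_prod_swap_adjacent[of f, OF swap] involutions_subset_carrier by blast
qed

end
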